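(* Let $G$ be a digraph. Then $\operatorname{CSP}(G^\bot)$ and $\operatorname{CSP}(G^\top)$ are each equivalent to $\operatorname{CSP}(G)$ under first order reductions.
   Context: Digraphs are finite and loopless. For $G=(V,E)$, $G^\top$ is the digraph on $V\cup\{\top\}$ ($\top\notin V$) with edges $E\cup\{(v,\top):v\in V\}$, and $G^\bot$ is the digraph on $V\cup\{\bot\}$ with edges $E\cup\{(\bot,v):v\in V\}$. $\operatorname{CSP}(H)$ is the problem of deciding whether a finite input digraph admits a homomorphism to $H$. First order reductions are in the sense of descriptive complexity (Immerman): input structures carry a linear order, and the output structure is defined by first order formulas (possibly with distinct parameters) on tuples of elements of the input. *)

theory Defs
  imports Main
begin

type_synonym 'a digraph = "'a set \<times> ('a \<times> 'a) set"

definition is_digraph :: "'a digraph \<Rightarrow> bool" where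
  "is_digraph G \<longleftrightarrow> finite (fst G) \<and> snd G \<subseteq> fst G \<times> fst G
     \<and> (\<forall>v. (v, v) \<notin> snd G)"

definition dg_hom :: "'a digraph \<Rightarrow> 'b digraph \<Rightarrow> ('a \<Rightarrow> 'b) \<Rightarrow> bool" where
  "dg_hom A B h \<longleftrightarrow> (\<forall>x\<in>fst A. h x \<in> fst B)
     \<and> (\<forall>x y. (x, y) \<in> snd A \<longrightarrow> (h x, h y) \<in> snd B)"

definition in_CSP :: "'a digraph \<Rightarrow> 'b digraph \<Rightarrow> bool" where
  "in_CSP A H \<longleftrightarrow> (\<exists>h. dg_hom A H h)"

definition top_ext :: "'a digraph \<Rightarrow> 'a option digraph" where
  "top_ext G = (insert None (Some ` fst G),
     (\<lambda>(u, v). (Some u, Some v)) ` snd G \<union> {(Some v, None) | v. v \<in> fst G})"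

definition bot_ext :: "'a digraph \<Rightarrow> 'a option digraph" where
  "bot_ext G = (insert None (Some ` fst G),
     (\<lambda>(u, v). (Some u, Some v)) ` snd G \<union> {(None, Some v) | v. v \<in> fst G})"

text \<open>Input structures: universe {0..<n} (n > 0) with the natural linear order,
  and a loopless edge relation E.  Variables are natural numbers.\<close>
datatype fo =
    FEq nat nat | FLess nat nat | FEdge nat nat
  | FNot fo | FAnd fo fo | FOr fo fo | FEx nat fo | FAll nat fo

fun fo_sat :: "nat \<Rightarrow> (nat \<times> nat) set \<Rightarrow> (nat \<Rightarrow> nat) \<Rightarrow> fo \<Rightarrow> bool" where
  "fo_sat n E \<sigma> (FEq i j) = (\<sigma> i = \<sigma> j)"
| "fo_sat n E \<sigma> (FLess i j) = (\<sigma> i < \<sigma> j)"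
| "fo_sat n E \<sigma> (FEdge i j) = ((\<sigma> i, \<sigma> j) \<in> E)"
| "fo_sat n E \<sigma> (FNot \<phi>) = (\<not> fo_sat n E \<sigma> \<phi>)"
| "fo_sat n E \<sigma> (FAnd \<phi> \<psi>) = (fo_sat n E \<sigma> \<phi> \<and> fo_sat n E \<sigma> \<psi>)"
| "fo_sat n E \<sigma> (FOr \<phi> \<psi>) = (fo_sat n E \<sigma> \<phi> \<or> fo_sat n E \<sigma> \<psi>)"
| "fo_sat n E \<sigma> (FEx x \<phi>) = (\<exists>a<n. fo_sat n E (\<sigma>(x := a)) \<phi>)"
| "fo_sat n E \<sigma> (FAll x \<phi>) = (\<forall>a<n. fo_sat n E (\<sigma>(x := a)) \<phi>)"

definition ordered_input :: "nat \<Rightarrow> (nat \<times> nat) set \<Rightarrow> bool" where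
  "ordered_input n E \<longleftrightarrow> 0 < n \<and> E \<subseteq> {..<n} \<times> {..<n} \<and> (\<forall>v. (v, v) \<notin> E)"

text \<open>A first order query of dimension k with m parameters: a universe formula
  phi0 with free variables 0..k-1 (the tuple) and the parameters, and an edge
  formula phi1 with free variables 0..k-1 (first tuple), k..2k-1 (second tuple)
  and the parameters.  Parameter j is variable 2k + j.\<close>
record fo_query =
  q_dim :: nat
  q_params :: nat
  q_univ :: fo
  q_edge :: fo

definition fo_env :: "nat \<Rightarrow> nat list \<Rightarrow> nat list \<Rightarrow> nat list \<Rightarrow> nat \<Rightarrow> nat" where
  "fo_env k xs ys ps v =
     (if v < k then xs ! v
      else if v < 2 * k then ys ! (v - k)
      else if v < 2 * k + length ps then ps ! (v - 2 * k) else 0)"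

definition query_output ::
  "fo_query \<Rightarrow> nat \<Rightarrow> (nat \<times> nat) set \<Rightarrow> nat list \<Rightarrow> nat list digraph" where
  "query_output Q n E ps =
     (let k = q_dim Q;
          U = {xs. length xs = k \<and> set xs \<subseteq> {..<n}
                   \<and> fo_sat n E (fo_env k xs [] ps) (q_univ Q)}
      in (U, {(xs, ys). xs \<in> U \<and> ys \<in> U
                   \<and> fo_sat n E (fo_env k xs ys ps) (q_edge Q)}))"

definition fo_reduction :: "fo_query \<Rightarrow> 'a digraph \<Rightarrow> 'b digraph \<Rightarrow> bool" where
  "fo_reduction Q H1 H2 \<longleftrightarrow>
     (\<forall>n E ps. ordered_input n E \<and> length ps = q_params Q \<and> distinct ps
        \<and> set ps \<subseteq> {..<n} \<longrightarrow>
        (in_CSP ({..<n}, E) H1 \<longleftrightarrow> in_CSP (query_output Q n E ps) H2))"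

definition fo_reducible :: "'a digraph \<Rightarrow> 'b digraph \<Rightarrow> bool" where
  "fo_reducible H1 H2 \<longleftrightarrow> (\<exists>Q. fo_reduction Q H1 H2)"

definition fo_equivalent :: "'a digraph \<Rightarrow> 'b digraph \<Rightarrow> bool" where
  "fo_equivalent H1 H2 \<longleftrightarrow> fo_reducible H1 H2 \<and> fo_reducible H2 H1"

end

theory Submission
  imports Defs
begin

text \<open>Since \<open>\<top>\<close> is a sink, an input maps to \<open>G\<^sup>\<top>\<close> iff its non-sinks induce a
  digraph mapping to \<open>G\<close> (sinks are sent to \<open>\<top>\<close>).  Conversely, giving every input
  vertex fresh out-neighbours forces it away from \<open>\<top>\<close>, so the input maps to \<open>G\<close> iff
  the enlarged input maps to \<open>G\<^sup>\<top>\<close>.  Both constructions are first order (for empty \<open>G\<close>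
  an output with loops does the job).  Finally \<open>G\<^sup>\<bot>\<close> is the reverse of \<open>H\<^sup>\<top>\<close> for \<open>H\<close> the
  reverse of \<open>G\<close>, and reversing the edges of input and output turns first order
  reductions into first order reductions.\<close>

lemma fo_reductionI_param_free:
  assumes "q_params Q = 0"
    and "\<And>n E. ordered_input n E \<Longrightarrow>
           in_CSP ({..<n}, E) H1 \<longleftrightarrow> in_CSP (query_output Q n E []) H2"
  shows "fo_reduction Q H1 H2"
  using assms by (auto simp: fo_reduction_def)

definition dg_rev :: "'a digraph \<Rightarrow> 'a digraph" where
  "dg_rev G = (fst G, (snd G)\<inverse>)"

lemma dg_rev_dg_rev [simp]: "dg_rev (dg_rev G) = G"
  by (simp add: dg_rev_def)

lemma is_digraph_dg_rev: "is_digraph G \<Longrightarrow> is_digraph (dg_rev G)"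
  by (auto simp: is_digraph_def dg_rev_def)

lemma in_CSP_dg_rev: "in_CSP (dg_rev A) (dg_rev H) \<longleftrightarrow> in_CSP A H"
  by (auto simp: in_CSP_def dg_hom_def dg_rev_def)

lemma bot_ext_eq_dg_rev_top_ext: "bot_ext G = dg_rev (top_ext (dg_rev G))"
  by (auto simp: bot_ext_def top_ext_def dg_rev_def)

fun fo_flip :: "fo \<Rightarrow> fo" where
  "fo_flip (FEdge i j) = FEdge j i"
| "fo_flip (FNot \<phi>) = FNot (fo_flip \<phi>)"
| "fo_flip (FAnd \<phi> \<psi>) = FAnd (fo_flip \<phi>) (fo_flip \<psi>)"
| "fo_flip (FOr \<phi> \<psi>) = FOr (fo_flip \<phi>) (fo_flip \<psi>)"
| "fo_flip (FEx x \<phi>) = FEx x (fo_flip \<phi>)"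
| "fo_flip (FAll x \<phi>) = FAll x (fo_flip \<phi>)"
| "fo_flip \<phi> = \<phi>"

lemma fo_sat_fo_flip: "fo_sat n E \<sigma> (fo_flip \<phi>) \<longleftrightarrow> fo_sat n (E\<inverse>) \<sigma> \<phi>"
  by (induction \<phi> arbitrary: \<sigma>) auto

fun fo_rename :: "(nat \<Rightarrow> nat) \<Rightarrow> fo \<Rightarrow> fo" where
  "fo_rename \<pi> (FEq i j) = FEq (\<pi> i) (\<pi> j)"
| "fo_rename \<pi> (FLess i j) = FLess (\<pi> i) (\<pi> j)"
| "fo_rename \<pi> (FEdge i j) = FEdge (\<pi> i) (\<pi> j)"
| "fo_rename \<pi> (FNot \<phi>) = FNot (fo_rename \<pi> \<phi>)"
| "fo_rename \<pi> (FAnd \<phi> \<psi>) = FAnd (fo_rename \<pi> \<phi>) (fo_rename \<pi> \<psi>)"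
| "fo_rename \<pi> (FOr \<phi> \<psi>) = FOr (fo_rename \<pi> \<phi>) (fo_rename \<pi> \<psi>)"
| "fo_rename \<pi> (FEx x \<phi>) = FEx (\<pi> x) (fo_rename \<pi> \<phi>)"
| "fo_rename \<pi> (FAll x \<phi>) = FAll (\<pi> x) (fo_rename \<pi> \<phi>)"

text \<open>Bound variables are renamed too, which is harmless as \<open>\<pi>\<close> is injective.\<close>
lemma fo_sat_fo_rename:
  assumes "inj \<pi>"
  shows "fo_sat n E \<sigma> (fo_rename \<pi> \<phi>) \<longleftrightarrow> fo_sat n E (\<sigma> \<circ> \<pi>) \<phi>"
proof -
  have upd: "\<sigma>(\<pi> x := a) \<circ> \<pi> = (\<sigma> \<circ> \<pi>)(x := a)" for \<sigma> x a
    using assms by (auto simp: fun_eq_iff dest: injD)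
  show ?thesis
    by (induction \<phi> arbitrary: \<sigma>) (simp_all add: upd)
qed

definition tuple_swap :: "nat \<Rightarrow> nat \<Rightarrow> nat" where
  "tuple_swap k v = (if v < k then v + k else if v < 2 * k then v - k else v)"

lemma inj_tuple_swap: "inj (tuple_swap k)"
proof (rule inj_on_inverseI)
  show "tuple_swap k (tuple_swap k v) = v" for v
    by (auto simp: tuple_swap_def)
qed

lemma fo_env_tuple_swap:
  assumes "length xs = k" "length ys = k"
  shows "fo_env k xs ys ps \<circ> tuple_swap k = fo_env k ys xs ps"
  using assms by (auto simp: fun_eq_iff fo_env_def tuple_swap_def)

definition dual_query :: "fo_query \<Rightarrow> fo_query" where
  "dual_query Q = Q\<lparr>q_univ := fo_flip (q_univ Q),
     q_edge := fo_rename (tuple_swap (q_dim Q)) (fo_flip (q_edge Q))\<rparr>"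

lemma query_output_dual_query:
  "query_output (dual_query Q) n E ps = dg_rev (query_output Q n (E\<inverse>) ps)"
  by (auto simp: query_output_def dual_query_def dg_rev_def Let_def fo_sat_fo_flip
      fo_sat_fo_rename[OF inj_tuple_swap] fo_env_tuple_swap)

lemma fo_reduction_dg_rev:
  assumes "fo_reduction Q H1 H2"
  shows "fo_reduction (dual_query Q) (dg_rev H1) (dg_rev H2)"
  unfolding fo_reduction_def
proof (intro allI impI)
  fix n E ps
  assume input: "ordered_input n E \<and> length ps = q_params (dual_query Q) \<and> distinct ps
    \<and> set ps \<subseteq> {..<n}"
  then have "ordered_input n (E\<inverse>)"
    by (auto simp: ordered_input_def)
  with input assms have "in_CSP ({..<n}, E\<inverse>) H1 \<longleftrightarrow> in_CSP (query_output Q n (E\<inverse>) ps) H2"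
    by (auto simp: fo_reduction_def dual_query_def)
  moreover have "dg_rev ({..<n}, E\<inverse>) = ({..<n}, E)"
    by (simp add: dg_rev_def)
  ultimately show "in_CSP ({..<n}, E) (dg_rev H1) \<longleftrightarrow>
      in_CSP (query_output (dual_query Q) n E ps) (dg_rev H2)"
    by (metis in_CSP_dg_rev query_output_dual_query)
qed

lemma fo_reducible_dg_rev: "fo_reducible H1 H2 \<Longrightarrow> fo_reducible (dg_rev H1) (dg_rev H2)"
  unfolding fo_reducible_def using fo_reduction_dg_rev by blast

lemma fo_equivalent_dg_rev: "fo_equivalent H1 H2 \<Longrightarrow> fo_equivalent (dg_rev H1) (dg_rev H2)"
  unfolding fo_equivalent_def by (simp add: fo_reducible_dg_rev)

lemma top_ext_vertices [simp]:
  "None \<in> fst (top_ext G)"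
  "Some v \<in> fst (top_ext G) \<longleftrightarrow> v \<in> fst G"
  by (auto simp: top_ext_def)

lemma top_ext_edges [simp]:
  "(Some a, Some b) \<in> snd (top_ext G) \<longleftrightarrow> (a, b) \<in> snd G"
  "(Some a, None) \<in> snd (top_ext G) \<longleftrightarrow> a \<in> fst G"
  "(None, q) \<notin> snd (top_ext G)"
  by (auto simp: top_ext_def)

lemma top_ext_edge_source:
  assumes "is_digraph G" "(p, q) \<in> snd (top_ext G)"
  shows "\<exists>v\<in>fst G. p = Some v"
  using assms by (cases p; cases q) (auto simp: is_digraph_def)

lemma top_ext_loopless: "is_digraph G \<Longrightarrow> (p, p) \<notin> snd (top_ext G)"
  by (cases p) (auto simp: is_digraph_def)

definition nonsink_query :: fo_query where
  "nonsink_query = \<lparr>q_dim = 1, q_params = 0, q_univ = FEx 2 (FEdge 0 2), q_edge = FEdge 0 1\<rparr>"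

lemma nonsink_query_vertices:
  "xs \<in> fst (query_output nonsink_query n E []) \<longleftrightarrow>
     (\<exists>x. xs = [x] \<and> x < n \<and> (\<exists>a<n. (x, a) \<in> E))"
  by (auto simp: query_output_def nonsink_query_def fo_env_def Let_def length_Suc_conv)

lemma nonsink_query_edges:
  "(xs, ys) \<in> snd (query_output nonsink_query n E []) \<longleftrightarrow>
     xs \<in> fst (query_output nonsink_query n E []) \<and> ys \<in> fst (query_output nonsink_query n E [])
     \<and> (hd xs, hd ys) \<in> E"
  by (auto simp: query_output_def nonsink_query_def fo_env_def Let_def length_Suc_conv)

lemma fo_reduction_nonsink_query:
  assumes G: "is_digraph G"
  shows "fo_reduction nonsink_query (top_ext G) G"
proof (rule fo_reductionI_param_free)
  fix n E
  assume "ordered_input n E"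
  then have E: "E \<subseteq> {..<n} \<times> {..<n}"
    by (simp add: ordered_input_def)
  let ?U = "query_output nonsink_query n E []"
  have nonsink: "[x] \<in> fst ?U \<longleftrightarrow> (\<exists>a. (x, a) \<in> E)" for x
    using E by (auto simp: nonsink_query_vertices)
  show "in_CSP ({..<n}, E) (top_ext G) \<longleftrightarrow> in_CSP ?U G"
  proof
    assume "in_CSP ({..<n}, E) (top_ext G)"
    then obtain h where h: "dg_hom ({..<n}, E) (top_ext G) h"
      by (auto simp: in_CSP_def)
    have h_edge: "(x, y) \<in> E \<Longrightarrow> (h x, h y) \<in> snd (top_ext G)" for x y
      using h by (simp add: dg_hom_def)
    have h_nonsink: "(x, a) \<in> E \<Longrightarrow> \<exists>v\<in>fst G. h x = Some v" for x a
      using h_edge top_ext_edge_source[OF G] by blast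
    have "dg_hom ?U G (\<lambda>xs. the (h (hd xs)))"
      unfolding dg_hom_def
    proof (intro conjI allI impI ballI)
      fix xs assume "xs \<in> fst ?U"
      then show "the (h (hd xs)) \<in> fst G"
        using h_nonsink by (force simp: nonsink_query_vertices)
    next
      fix xs ys assume "(xs, ys) \<in> snd ?U"
      then obtain x y b where "xs = [x]" "ys = [y]" "(x, y) \<in> E" "(y, b) \<in> E"
        by (auto simp: nonsink_query_edges nonsink_query_vertices)
      moreover obtain v w where "h x = Some v" "h y = Some w"
        using h_nonsink \<open>(x, y) \<in> E\<close> \<open>(y, b) \<in> E\<close> by blast
      ultimately show "(the (h (hd xs)), the (h (hd ys))) \<in> snd G"
        using h_edge by fastforce
    qed
    then show "in_CSP ?U G"
      by (auto simp: in_CSP_def)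
  next
    assume "in_CSP ?U G"
    then obtain g where g: "dg_hom ?U G g"
      by (auto simp: in_CSP_def)
    define h where "h x = (if [x] \<in> fst ?U then Some (g [x]) else None)" for x
    have "dg_hom ({..<n}, E) (top_ext G) h"
      unfolding dg_hom_def
    proof (intro conjI allI impI ballI)
      fix x
      show "h x \<in> fst (top_ext G)"
        using g by (auto simp: h_def dg_hom_def)
    next
      fix x y assume "(x, y) \<in> snd ({..<n}, E)"
      then have "(x, y) \<in> E" by simp
      then have "[x] \<in> fst ?U" and "[y] \<in> fst ?U \<Longrightarrow> ([x], [y]) \<in> snd ?U"
        using nonsink by (auto simp: nonsink_query_edges)
      then show "(h x, h y) \<in> snd (top_ext G)"
        using g by (auto simp: h_def dg_hom_def)
    qed
    then show "in_CSP ({..<n}, E) (top_ext G)"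
      by (auto simp: in_CSP_def)
  qed
qed (simp add: nonsink_query_def)

text \<open>The diagonal pair \<open>[a, a]\<close> stands for the input vertex \<open>a\<close>; it gets the extra
  out-neighbours \<open>[a, d]\<close>, \<open>d \<noteq> a\<close>.\<close>
definition pendant_query :: fo_query where
  "pendant_query = \<lparr>q_dim = 2, q_params = 0, q_univ = FEq 0 0,
     q_edge = FOr (FAnd (FEq 0 1) (FAnd (FEq 2 3) (FEdge 0 2)))
                  (FAnd (FEq 0 1) (FAnd (FEq 0 2) (FNot (FEq 2 3))))\<rparr>"

lemma pendant_query_vertices:
  "xs \<in> fst (query_output pendant_query n E []) \<longleftrightarrow> (\<exists>a b. xs = [a, b] \<and> a < n \<and> b < n)"
  by (auto simp: query_output_def pendant_query_def fo_env_def Let_def numeral_2_eq_2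
      length_Suc_conv)

lemma pendant_query_edges:
  "(xs, ys) \<in> snd (query_output pendant_query n E []) \<longleftrightarrow>
     (\<exists>a b c d. xs = [a, b] \<and> ys = [c, d] \<and> a < n \<and> b < n \<and> c < n \<and> d < n
        \<and> a = b \<and> (c = d \<and> (a, c) \<in> E \<or> c = a \<and> d \<noteq> c))"
  by (auto simp: query_output_def pendant_query_def fo_env_def Let_def numeral_2_eq_2
      length_Suc_conv)

text \<open>The default \<open>v\<^sub>0\<close> is needed only for one-vertex inputs, whose outputs have no
  pendant edges.\<close>
lemma fo_reduction_pendant_query:
  assumes G: "is_digraph G" and v0: "v0 \<in> fst G"
  shows "fo_reduction pendant_query G (top_ext G)"
proof (rule fo_reductionI_param_free)
  fix n E
  assume "ordered_input n E"
  then have E: "E \<subseteq> {..<n} \<times> {..<n}" and loopless: "\<And>v. (v, v) \<notin> E"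
    by (auto simp: ordered_input_def)
  let ?U = "query_output pendant_query n E []"
  show "in_CSP ({..<n}, E) G \<longleftrightarrow> in_CSP ?U (top_ext G)"
  proof
    assume "in_CSP ({..<n}, E) G"
    then obtain h where h: "dg_hom ({..<n}, E) G h"
      by (auto simp: in_CSP_def)
    define g where "g xs = (if xs ! 0 = xs ! 1 then Some (h (xs ! 0)) else None)" for xs
    have "dg_hom ?U (top_ext G) g"
      using h by (auto simp: dg_hom_def g_def pendant_query_vertices pendant_query_edges)
    then show "in_CSP ?U (top_ext G)"
      by (auto simp: in_CSP_def)
  next
    assume "in_CSP ?U (top_ext G)"
    then obtain g where g: "dg_hom ?U (top_ext G) g"
      by (auto simp: in_CSP_def)
    have g_edge: "(xs, ys) \<in> snd ?U \<Longrightarrow> (g xs, g ys) \<in> snd (top_ext G)" for xs ys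
      using g by (simp add: dg_hom_def)
    define h where "h x = (case g [x, x] of Some v \<Rightarrow> v | None \<Rightarrow> v0)" for x
    have "dg_hom ({..<n}, E) G h"
      unfolding dg_hom_def
    proof (intro conjI allI impI ballI)
      fix x assume "x \<in> fst ({..<n}, E)"
      then have "g [x, x] \<in> fst (top_ext G)"
        using g by (auto simp: dg_hom_def pendant_query_vertices)
      then show "h x \<in> fst G"
        using v0 by (cases "g [x, x]") (auto simp: h_def)
    next
      fix x y assume "(x, y) \<in> snd ({..<n}, E)"
      then have "(x, y) \<in> E" "x < n" "y < n" "x \<noteq> y"
        using E loopless by auto
      then have edge: "(g [x, x], g [y, y]) \<in> snd (top_ext G)"
        and pendant: "(g [y, y], g [y, x]) \<in> snd (top_ext G)"
        by (auto intro!: g_edge simp: pendant_query_edges)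
      obtain v where "g [x, x] = Some v"
        using top_ext_edge_source[OF G edge] by blast
      moreover obtain w where "g [y, y] = Some w"
        using top_ext_edge_source[OF G pendant] by blast
      ultimately show "(h x, h y) \<in> snd G"
        using edge by (simp add: h_def)
    qed
    then show "in_CSP ({..<n}, E) G"
      by (auto simp: in_CSP_def)
  qed
qed (simp add: pendant_query_def)

text \<open>Every output vertex carries a loop, so the output maps to no loopless digraph.\<close>
definition loop_query :: fo_query where
  "loop_query = \<lparr>q_dim = 1, q_params = 0, q_univ = FEq 0 0, q_edge = FEq 0 0\<rparr>"

lemma fo_reduction_loop_query:
  assumes "fst G = {}" and loopless: "\<And>p. (p, p) \<notin> snd H"
  shows "fo_reduction loop_query G H"
proof (rule fo_reductionI_param_free)
  fix n E
  assume "ordered_input n E"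
  then have "0 < n"
    by (simp add: ordered_input_def)
  then have "([0], [0]) \<in> snd (query_output loop_query n E [])"
    by (auto simp: query_output_def loop_query_def fo_env_def Let_def)
  then have "\<not> in_CSP (query_output loop_query n E []) H"
    using loopless by (auto simp: in_CSP_def dg_hom_def)
  moreover have "\<not> in_CSP ({..<n}, E) G"
    using \<open>0 < n\<close> assms(1) by (auto simp: in_CSP_def dg_hom_def)
  ultimately show "in_CSP ({..<n}, E) G \<longleftrightarrow> in_CSP (query_output loop_query n E []) H"
    by blast
qed (simp add: loop_query_def)

lemma fo_equivalent_top_ext:
  assumes "is_digraph G"
  shows "fo_equivalent (top_ext G) G"
proof -
  have "fo_reducible G (top_ext G)"
  proof (cases "fst G = {}")
    case True
    then show ?thesis
      unfolding fo_reducible_def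
      using fo_reduction_loop_query[of G "top_ext G"] top_ext_loopless[OF assms] by blast
  next
    case False
    then show ?thesis
      using fo_reduction_pendant_query[OF assms] by (auto simp: fo_reducible_def)
  qed
  then show ?thesis
    using fo_reduction_nonsink_query[OF assms] by (auto simp: fo_equivalent_def fo_reducible_def)
qed

theorem proposition3p2:
  fixes G :: "'a digraph"
  assumes "is_digraph G"
  shows "fo_equivalent (bot_ext G) G \<and> fo_equivalent (top_ext G) G"
proof
  have "fo_equivalent (dg_rev (top_ext (dg_rev G))) (dg_rev (dg_rev G))"
    by (intro fo_equivalent_dg_rev fo_equivalent_top_ext is_digraph_dg_rev assms)
  then show "fo_equivalent (bot_ext G) G"
    by (simp only: bot_ext_eq_dg_rev_top_ext dg_rev_dg_rev)
  show "fo_equivalent (top_ext G) G"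
    using fo_equivalent_top_ext[OF assms] .
qed

end
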